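(* Let $0<\mu_2<\tfrac12<\mu_1<1$. For every $\epsilon\in(0,1)$ there exists a twice continuously differentiable function $f^{SD}_\epsilon:\mathbb{R}\to\mathbb{R}$, bounded below, with globally Lipschitz continuous derivative (indeed with second derivative bounded by a constant independent of $\epsilon$) and with values in a bounded interval independent of $\epsilon$, together with a sequence of steplengths $\mu_k\in[\tfrac14,1]$, such that the steepest-descent iterates $x_0=0$, $x_{k+1}=x_k-\mu_kg_k$ (with $g_k=(f^{SD}_\epsilon)'(x_k)$) satisfy the Goldstein conditions $$f(x_k)+\mu_1g_ks_k\le f(x_{k+1})\le f(x_k)+\mu_2g_ks_k,\qquad s_k=x_{k+1}-x_k,$$ for all $k$, and $|g_k|>\epsilon$ for $k<k_\epsilon$ while $|g_{k_\epsilon}|\le\epsilon$, where $k_\epsilon=\lceil\epsilon^{-2}\rceil$. *)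

theory Defs
  imports Complex_Main
begin

fun sd_iter :: "(real \<Rightarrow> real) \<Rightarrow> (nat \<Rightarrow> real) \<Rightarrow> nat \<Rightarrow> real" where
  "sd_iter g mu 0 = 0"
| "sd_iter g mu (Suc k) = sd_iter g mu k - mu k * g (sd_iter g mu k)"

end

theory Submission
  imports Defs "HOL-Analysis.Analysis"
begin

text \<open>
  The slope of F y = -e y - e^2/(2\<pi>) sin(2\<pi> y/e) is -e(1 + cos(2\<pi> y/e)): it equals -2e at
  every multiple of e and vanishes together with F'' at the odd multiples of e/2. Clamping
  the argument to [-e/2, (N - 1/2) e] therefore gives a C^2 function f with |f''| \<le> 2\<pi>
  independently of e. Steepest descent on f with steplength 1/2 walks from k e to (k + 1) e
  and decreases f by exactly e^2, half of the linear decrease 2 e^2, which lies between the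
  two Goldstein bounds. The gradient keeps modulus 2 e > e for N steps, and a final step of
  length 1/4 lands on the critical point (N - 1/2) e. For N = \<lceil>1/e^2\<rceil> the values of f stay
  in [-2, 1].
\<close>

lemma DERIV_comp_max:
  fixes F F' :: "real \<Rightarrow> real"
  assumes "\<And>x. (F has_real_derivative F' x) (at x)" and "F' a = 0"
  shows "((\<lambda>y. F (max a y)) has_real_derivative F' (max a x)) (at x)"
proof -
  have "((\<lambda>y. if y \<in> {..a} then F a else F y) has_derivative
          (if x \<in> {..a} then (*) 0 else (*) (F' x))) (at x within {..a} \<union> {a..})"
    by (rule has_derivative_If_within_closures)
       (use assms in \<open>auto intro: has_field_derivative_imp_has_derivative has_field_derivative_at_within\<close>)
  moreover have "{..a} \<union> {a..} = (UNIV :: real set)" by auto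
  moreover have "(\<lambda>y. if y \<in> {..a} then F a else F y) = (\<lambda>y. F (max a y))"
    by (auto simp: max_def)
  moreover have "(if x \<in> {..a} then (*) 0 else (*) (F' x)) = (*) (F' (max a x))"
    using \<open>F' a = 0\<close> by (auto simp: max_def)
  ultimately show ?thesis by (simp add: has_field_derivative_def)
qed

lemma DERIV_comp_min:
  fixes F F' :: "real \<Rightarrow> real"
  assumes "\<And>x. (F has_real_derivative F' x) (at x)" and "F' b = 0"
  shows "((\<lambda>y. F (min b y)) has_real_derivative F' (min b x)) (at x)"
proof -
  have "((\<lambda>y. if y \<in> {b..} then F b else F y) has_derivative
          (if x \<in> {b..} then (*) 0 else (*) (F' x))) (at x within {b..} \<union> {..b})"
    by (rule has_derivative_If_within_closures)
       (use assms in \<open>auto intro: has_field_derivative_imp_has_derivative has_field_derivative_at_within\<close>)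
  moreover have "{b..} \<union> {..b} = (UNIV :: real set)" by auto
  moreover have "(\<lambda>y. if y \<in> {b..} then F b else F y) = (\<lambda>y. F (min b y))"
    by (auto simp: min_def)
  moreover have "(if x \<in> {b..} then (*) 0 else (*) (F' x)) = (*) (F' (min b x))"
    using \<open>F' b = 0\<close> by (auto simp: min_def)
  ultimately show ?thesis by (simp add: has_field_derivative_def)
qed

lemma DERIV_comp_clamp:
  fixes F F' :: "real \<Rightarrow> real"
  assumes F: "\<And>x. (F has_real_derivative F' x) (at x)" and "F' lo = 0" "F' hi = 0"
  shows "((\<lambda>y. F (max lo (min hi y))) has_real_derivative F' (max lo (min hi x))) (at x)"
proof -
  have "((\<lambda>z. F (max lo z)) has_real_derivative F' (max lo z)) (at z)" for z
    using F \<open>F' lo = 0\<close> by (rule DERIV_comp_max)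
  moreover have "F' (max lo hi) = 0" using assms by (simp add: max_def)
  ultimately show ?thesis by (rule DERIV_comp_min)
qed

lemma goldstein_of_half_decrease:
  fixes \<mu>1 \<mu>2 f0 f1 g s :: real
  assumes "\<mu>2 \<le> 1/2" "1/2 \<le> \<mu>1" "g * s \<le> 0" "f1 = f0 + g * s / 2"
  shows "f0 + \<mu>1 * g * s \<le> f1 \<and> f1 \<le> f0 + \<mu>2 * g * s"
proof -
  have "\<mu>1 * (g * s) \<le> 1/2 * (g * s)" "1/2 * (g * s) \<le> \<mu>2 * (g * s)"
    by (rule mult_right_mono_neg; use assms in simp)+
  then show ?thesis using assms by (simp add: algebra_simps)
qed

lemma sd_iter_descent:
  fixes g :: "real \<Rightarrow> real" and mu :: "nat \<Rightarrow> real"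
  assumes "0 \<le> mu k"
  shows "g (sd_iter g mu k) * (sd_iter g mu (Suc k) - sd_iter g mu k) \<le> 0"
proof -
  let ?g = "g (sd_iter g mu k)"
  have "?g * (sd_iter g mu (Suc k) - sd_iter g mu k) = - (mu k * (?g * ?g))"
    by (simp add: algebra_simps)
  moreover have "0 \<le> mu k * (?g * ?g)" using assms by simp
  ultimately show ?thesis by linarith
qed

locale goldstein_sd_example =
  fixes e :: real and N :: nat
  assumes e_pos: "0 < e" and N_pos: "0 < N"
begin

definition lo :: real where "lo = - e / 2"
definition hi :: real where "hi = (real N - 1/2) * e"

definition F :: "real \<Rightarrow> real" where "F y = - e * y - e\<^sup>2 / (2 * pi) * sin (2 * pi * y / e)"
definition F' :: "real \<Rightarrow> real" where "F' y = - e * (1 + cos (2 * pi * y / e))"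
definition F'' :: "real \<Rightarrow> real" where "F'' y = 2 * pi * sin (2 * pi * y / e)"

lemma F_deriv: "(F has_real_derivative F' y) (at y)"
  unfolding F_def F'_def using e_pos
  by (auto intro!: derivative_eq_intros simp: field_simps power2_eq_square)

lemma F'_deriv: "(F' has_real_derivative F'' y) (at y)"
  unfolding F'_def F''_def using e_pos
  by (auto intro!: derivative_eq_intros simp: field_simps)

lemma F'_nonpos: "F' y \<le> 0"
proof -
  have "0 \<le> 1 + cos (2 * pi * y / e)"
    using cos_ge_minus_one[of "2 * pi * y / e"] by linarith
  then show ?thesis unfolding F'_def using e_pos by simp
qed

lemma arg_lo: "2 * pi * lo / e = - pi"
  using e_pos by (simp add: lo_def)

lemma arg_hi: "2 * pi * hi / e = real (2 * N - 1) * pi"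
  using e_pos N_pos by (simp add: hi_def field_simps)

lemma arg_grid: "2 * pi * (real k * e) / e = 2 * real k * pi"
  using e_pos by simp

lemma F'_lo: "F' lo = 0" and F''_lo: "F'' lo = 0"
  by (simp_all add: F'_def F''_def arg_lo)

lemma F'_hi: "F' hi = 0" and F''_hi: "F'' hi = 0"
proof -
  have "odd (2 * N - 1)" using N_pos by simp
  then show "F' hi = 0" "F'' hi = 0"
    unfolding F'_def F''_def arg_hi cos_npi sin_npi by simp_all
qed

definition f :: "real \<Rightarrow> real" where "f y = F (max lo (min hi y))"
definition f' :: "real \<Rightarrow> real" where "f' y = F' (max lo (min hi y))"
definition f'' :: "real \<Rightarrow> real" where "f'' y = F'' (max lo (min hi y))"

lemma f_deriv: "(f has_real_derivative f' x) (at x)"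
  unfolding f_def f'_def using F_deriv F'_lo F'_hi by (rule DERIV_comp_clamp)

lemma f'_deriv: "(f' has_real_derivative f'' x) (at x)"
  unfolding f'_def f''_def using F'_deriv F''_lo F''_hi by (rule DERIV_comp_clamp)

lemma continuous_f'': "continuous_on UNIV f''"
  unfolding f''_def F''_def using e_pos by (auto intro!: continuous_intros)

lemma abs_f''_le: "\<bar>f'' x\<bar> \<le> 2 * pi"
  unfolding f''_def F''_def by (simp add: abs_mult)

lemma f'_lipschitz: "\<bar>f' x - f' y\<bar> \<le> 2 * pi * \<bar>x - y\<bar>"
  using field_differentiable_bound[of UNIV f' f'' "2 * pi" x y] f'_deriv abs_f''_le
  by (simp add: has_field_derivative_at_within)

lemma lo_le_hi: "lo \<le> hi"
proof -
  have "1 \<le> real N" using N_pos by simp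
  then show ?thesis unfolding lo_def hi_def using e_pos by (simp add: algebra_simps)
qed

lemma clamp_grid:
  assumes "k < N" shows "max lo (min hi (real k * e)) = real k * e"
proof -
  have "real k \<le> real N - 1/2" using assms by linarith
  then have "real k * e \<le> hi" using e_pos by (simp add: hi_def mult_right_mono)
  moreover have "lo \<le> real k * e"
    unfolding lo_def using e_pos zero_le_mult_iff[of "real k" e] by linarith
  ultimately show ?thesis by simp
qed

lemma clamp_hi: "max lo hi = hi"
  using lo_le_hi by simp

lemma f'_grid: "k < N \<Longrightarrow> f' (real k * e) = - 2 * e"
  by (simp add: f'_def clamp_grid F'_def arg_grid)

lemma f_grid: "k < N \<Longrightarrow> f (real k * e) = - real k * e\<^sup>2"
  by (simp add: f_def clamp_grid F_def arg_grid power2_eq_square)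

lemma f'_hi: "f' hi = 0"
  by (simp add: f'_def clamp_hi F'_hi)

lemma f_hi: "f hi = - (real N - 1/2) * e\<^sup>2"
proof -
  have "f hi = F hi" by (simp add: f_def clamp_hi)
  also have "\<dots> = - (real N - 1/2) * e\<^sup>2"
    unfolding F_def arg_hi sin_npi by (simp add: hi_def power2_eq_square algebra_simps)
  finally show ?thesis .
qed

definition steps :: "nat \<Rightarrow> real" where "steps k = (if k = N - 1 then 1/4 else 1/2)"

lemma sd_iter_steps: "sd_iter f' steps k = (if k < N then real k * e else hi)"
proof (induction k)
  case 0
  then show ?case using N_pos by simp
next
  case (Suc k)
  consider "Suc k < N" | "Suc k = N" | "N < Suc k" by linarith
  then show ?case
  proof cases
    case 1
    then show ?thesis using Suc f'_grid[of k] by (simp add: steps_def algebra_simps)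
  next
    case 2
    then have "k < N" "real N = real k + 1" "steps k = 1/4" by (auto simp: steps_def)
    then have "sd_iter f' steps (Suc k) = real k * e + e / 2"
      using Suc.IH f'_grid[of k] by simp
    also have "\<dots> = hi" unfolding hi_def \<open>real N = real k + 1\<close> by (simp add: algebra_simps)
    finally show ?thesis using 2 by simp
  next
    case 3
    then show ?thesis using Suc f'_hi by simp
  qed
qed

lemma sd_step_half_decrease:
  "f (sd_iter f' steps (Suc k)) =
     f (sd_iter f' steps k) + f' (sd_iter f' steps k) * (sd_iter f' steps (Suc k) - sd_iter f' steps k) / 2"
proof -
  consider "Suc k < N" | "Suc k = N" | "N \<le> k" by linarith
  then show ?thesis
  proof cases
    case 1
    then show ?thesis unfolding sd_iter_steps[of k] sd_iter_steps[of "Suc k"]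
      using f_grid[of k] f_grid[of "Suc k"] f'_grid[of k]
      by (simp add: algebra_simps power2_eq_square)
  next
    case 2
    then have "k < N" and N: "real N = real k + 1" by auto
    have "hi - real k * e = e / 2" unfolding hi_def N by (simp add: algebra_simps)
    moreover have "f hi = f (real k * e) - e\<^sup>2 / 2"
      unfolding f_hi f_grid[OF \<open>k < N\<close>] N by (simp add: algebra_simps)
    ultimately show ?thesis unfolding sd_iter_steps[of k] sd_iter_steps[of "Suc k"]
      using 2 f'_grid[OF \<open>k < N\<close>] by (simp add: power2_eq_square)
  next
    case 3
    then show ?thesis by (simp add: sd_iter_steps f'_hi)
  qed
qed

lemma goldstein_steps:
  assumes "\<mu>2 \<le> 1/2" "1/2 \<le> \<mu>1"
  shows "let xk = sd_iter f' steps k; xk1 = sd_iter f' steps (Suc k); gk = f' xk; sk = xk1 - xk in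
           f xk + \<mu>1 * gk * sk \<le> f xk1 \<and> f xk1 \<le> f xk + \<mu>2 * gk * sk"
  unfolding Let_def
  by (rule goldstein_of_half_decrease[OF assms sd_iter_descent sd_step_half_decrease]) (simp add: steps_def)

lemma steps_bounds: "1/4 \<le> steps k \<and> steps k \<le> 1"
  by (simp add: steps_def)

lemma gradient_large: "k < N \<Longrightarrow> e < \<bar>f' (sd_iter f' steps k)\<bar>"
  using e_pos by (simp add: sd_iter_steps f'_grid)

lemma gradient_vanishes: "f' (sd_iter f' steps N) = 0"
  by (simp add: sd_iter_steps f'_hi)

lemma F_antimono: "a \<le> b \<Longrightarrow> F b \<le> F a"
  using F_deriv F'_nonpos by (blast intro: DERIV_nonpos_imp_nonincreasing)

lemma f_bounds: "- (real N - 1/2) * e\<^sup>2 \<le> f x \<and> f x \<le> e\<^sup>2 / 2"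
proof -
  let ?y = "max lo (min hi x)"
  have "F hi \<le> F ?y" "F ?y \<le> F lo" using lo_le_hi by (auto intro: F_antimono)
  moreover have "F hi = - (real N - 1/2) * e\<^sup>2" using f_hi by (simp add: f_def clamp_hi)
  moreover have "F lo = e\<^sup>2 / 2"
    unfolding F_def arg_lo by (simp add: lo_def power2_eq_square)
  ultimately show ?thesis by (simp add: f_def)
qed

end

theorem theoremA1:
  fixes \<mu>1 \<mu>2 :: real
  assumes "0 < \<mu>2" "\<mu>2 < 1/2" "1/2 < \<mu>1" "\<mu>1 < 1"
  shows "\<exists>L a b :: real. \<forall>\<epsilon>::real. 0 < \<epsilon> \<and> \<epsilon> < 1 \<longrightarrow>
    (\<exists>(f::real \<Rightarrow> real) f' f'' (mu::nat \<Rightarrow> real).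
       (\<forall>x. (f has_real_derivative f' x) (at x)) \<and>
       (\<forall>x. (f' has_real_derivative f'' x) (at x)) \<and>
       continuous_on UNIV f'' \<and>
       (\<exists>m. \<forall>x. m \<le> f x) \<and>
       (\<exists>M. \<forall>x y. \<bar>f' x - f' y\<bar> \<le> M * \<bar>x - y\<bar>) \<and>
       (\<forall>x. \<bar>f'' x\<bar> \<le> L) \<and>
       (\<forall>x. a \<le> f x \<and> f x \<le> b) \<and>
       (\<forall>k. 1/4 \<le> mu k \<and> mu k \<le> 1) \<and>
       (\<forall>k. let xk = sd_iter f' mu k; xk1 = sd_iter f' mu (Suc k);
               gk = f' xk; sk = xk1 - xk in
             f xk + \<mu>1 * gk * sk \<le> f xk1 \<and> f xk1 \<le> f xk + \<mu>2 * gk * sk) \<and>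
       (\<forall>k < nat \<lceil>1 / \<epsilon>\<^sup>2\<rceil>. \<bar>f' (sd_iter f' mu k)\<bar> > \<epsilon>) \<and>
       \<bar>f' (sd_iter f' mu (nat \<lceil>1 / \<epsilon>\<^sup>2\<rceil>))\<bar> \<le> \<epsilon>)"
proof (rule exI[of _ "2 * pi"], rule exI[of _ "-2"], rule exI[of _ 1], intro allI impI, goal_cases)
  case (1 e)
  then have e: "0 < e" "e\<^sup>2 < 1" by (auto simp: power_less_one_iff)
  let ?N = "nat \<lceil>1 / e\<^sup>2\<rceil>"
  have "real ?N = of_int \<lceil>1 / e\<^sup>2\<rceil>" using e by simp
  then have "1 / e\<^sup>2 \<le> real ?N" "real ?N < 1 / e\<^sup>2 + 1"
    using ceiling_correct[of "1 / e\<^sup>2"] by linarith+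
  then have N_pos: "0 < ?N" and N_bound: "real ?N * e\<^sup>2 < 1 + e\<^sup>2"
    using e by (auto simp: field_simps)
  interpret ex: goldstein_sd_example e ?N
    using e N_pos by unfold_locales auto
  have range: "-2 \<le> ex.f x \<and> ex.f x \<le> 1" for x
    using ex.f_bounds[of x] N_bound e by (auto simp: algebra_simps)
  show ?case
    using ex.f_deriv ex.f'_deriv ex.continuous_f'' range ex.f'_lipschitz ex.abs_f''_le
      ex.steps_bounds ex.goldstein_steps[of \<mu>2 \<mu>1] assms ex.gradient_large ex.gradient_vanishes e
    by (intro exI[of _ ex.f] exI[of _ ex.f'] exI[of _ ex.f''] exI[of _ ex.steps]) auto
qed

end
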